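(* Let $(\alpha,\beta)\in\Delta_K$, $(\alpha_n,\beta_n)=T^n(\alpha,\beta)$, $\varepsilon_n=\varepsilon(\alpha_n,\beta_n)$, and $n\ge0$. Then the dual substitution $\Theta_{\varepsilon_n}$ satisfies: (1) if $(\bar{\bar x},i^* )\in\mathscr S(\bar{\bar\nu}(\alpha_{n+1},\beta_{n+1}))$, then every unit square occurring in $\Theta_{\varepsilon_n}(\bar{\bar x},i^* )$ belongs to $\mathscr S(\bar{\bar\nu}(\alpha_n,\beta_n))$, so $\Theta_{\varepsilon_n}(\bar{\bar x},i^* )\in\mathcal G(\bar{\bar\nu}(\alpha_n,\beta_n))$; (2) two distinct unit squares of $\mathscr S(\bar{\bar\nu}(\alpha_{n+1},\beta_{n+1}))$ are sent to images having no unit square in common (i.e. disjoint except for their boundaries); (3) for every $(\bar{\bar z},k^* )\in\mathscr S(\bar{\bar\nu}(\alpha_n,\beta_n))$ there exists $(\bar{\bar x},i^* )\in\mathscr S(\bar{\bar\nu}(\alpha_{n+1},\beta_{n+1}))$ such that $\Theta_{\varepsilon_n}(\bar{\bar x},i^* )\succ(\bar{\bar z},k^* )$, i.e. $(\bar{\bar z},k^* )$ is one of the unit squares of $\Theta_{\varepsilon_n}(\bar{\bar x},i^* )$.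
   Context: Let $K\subset\mathbb{R}$ be a real cubic number field, $N=N_{K/\mathbb{Q}}$ its norm. Fix $r=p/q$ with $p,q$ positive coprime integers and $3\nmid p$. Let $\Delta_K=\{(\alpha,\beta)\in K^2:\ 1,\alpha,\beta \text{ linearly independent over }\mathbb{Q},\ \alpha,\beta>0,\ \alpha+\beta<1\}$ and $Ind=\{(i,j): i,j\in\{0,1,2\},\ i\neq j\}$. Let $\Delta=\{(x,y)\in\mathbb{R}^2: x,y\ge 0,\ x+y\le 1\}$ and $\triangle(1,2)=\{(x,y)\in\Delta: x\ge y\}$, $\triangle(2,1)=\{x\le y\}$, $\triangle(0,1)=\{2x+y-1\le 0\}$, $\triangle(1,0)=\{2x+y-1\ge 0\}$, $\triangle(0,2)=\{x+2y-1\le0\}$, $\triangle(2,0)=\{x+2y-1\ge 0\}$ (all subsets of $\Delta$). Maps $T_{(i,j)}:\triangle(i,j)\to\Delta$: $T_{(1,2)}(x,y)=(\frac{x-y}{1-y},\frac{y}{1-y})$, $T_{(2,1)}(x,y)=(\frac{x}{1-x},\frac{y-x}{1-x})$, $T_{(0,1)}(x,y)=(\frac{x}{1-x},\frac{y}{1-x})$, $T_{(1,0)}(x,y)=(\frac{2x+y-1}{x+y},\frac{y}{x+y})$, $T_{(0,2)}(x,y)=(\frac{x}{1-y},\frac{y}{1-y})$, $T_{(2,0)}(x,y)=(\frac{x}{x+y},\frac{x+2y-1}{x+y})$. For $(\alpha,\beta)\in\Delta_K$ put $\gamma=1-\alpha-\beta$ and $v_{\{1,2\}}=\frac{\alpha^r\beta^r}{|N(\alpha)N(\beta)|}$,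 $v_{\{0,1\}}=\frac{\alpha^r\gamma^r}{|N(\alpha)N(\gamma)|}$, $v_{\{0,2\}}=\frac{\beta^r\gamma^r}{|N(\beta)N(\gamma)|}$; the maximum is attained at a unique pair $\{i_0,j_0\}$. $\varepsilon(\alpha,\beta)$ is the ordered pair $(i,j)\in Ind$ with $\{i,j\}=\{i_0,j_0\}$ and $(\alpha,\beta)\in\triangle(i,j)$, and $T(\alpha,\beta)=T_{\varepsilon(\alpha,\beta)}(\alpha,\beta)$ (a map $\Delta_K\to\Delta_K$). For $(i,j)\in Ind$, $M_{(i,j)}=(m_{k\ell})_{0\le k,\ell\le2}$ with $m_{k\ell}=1$ if $k=\ell$ or $(k,\ell)=(i,j)$, and $0$ otherwise; $L_{(i,j)}:=M_{(j,i)}$. For $(\alpha,\beta)\in\Delta_K$, $\bar{\bar\nu}(\alpha,\beta)={}^t(1-\alpha-\beta,\alpha,\beta)$. Let $\bar{\bar e}_0,\bar{\bar e}_1,\bar{\bar e}_2$ be the standard basis of $\mathbb{R}^3$. A unit square $(\bar{\bar x},i^* )$ ($\bar{\bar x}\in\mathbb{Z}^3$, $i\in\{0,1,2\}$) is the set $\{\bar{\bar x}+t\bar{\bar e}_j+u\bar{\bar e}_k: t,u\in[0,1]\}$ with $\{i,j,k\}=\{0,1,2\}$. For $\bar{\bar a}\in\mathbb{R}^3_{>0}$ with $\mathbb{Q}$-linearly independent coordinates, the stepped surface is $\mathscr S(\bar{\bar a})=\{(\bar{\bar x},i^* ): \bar{\bar x}\in\mathbb{Z}^3, i\in\{0,1,2\},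 \langle\bar{\bar x},\bar{\bar a}\rangle>0,\ \langle\bar{\bar x}-\bar{\bar e}_i,\bar{\bar a}\rangle\le0\}$, and $\mathcal G(\bar{\bar a})$ is the free $\mathbb{Z}$-module of finite formal sums of elements of $\mathscr S(\bar{\bar a})$. A sum with all coefficients $1$ (a patch) is identified with its finite set of squares; for patches $\gamma,\delta$, $\gamma\prec\delta$ (equivalently $\delta\succ\gamma$) means the set of squares of $\gamma$ is contained in that of $\delta$. For $(i,j)\in Ind$ the dual substitution $\Theta_{(i,j)}$ is defined on unit squares by $\Theta_{(i,j)}(\bar{\bar x},j^* )=(L_{(i,j)}^{-1}(\bar{\bar x}+\bar{\bar e}_i),i^* )+(L_{(i,j)}^{-1}\bar{\bar x},j^* )$ and $\Theta_{(i,j)}(\bar{\bar x},k^* )=(L_{(i,j)}^{-1}\bar{\bar x},k^* )$ for $k\neq j$, and extended additively to formal sums. *)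

theory Defs
  imports Complex_Main "HOL-Library.Multiset"
begin

definition is_subfield_real :: "real set \<Rightarrow> bool" where
  "is_subfield_real K \<longleftrightarrow> 0 \<in> K \<and> 1 \<in> K \<and>
     (\<forall>x\<in>K. \<forall>y\<in>K. x + y \<in> K \<and> x - y \<in> K \<and> x * y \<in> K) \<and>
     (\<forall>x\<in>K. x \<noteq> 0 \<longrightarrow> inverse x \<in> K)"

definition is_real_cubic_field :: "real set \<Rightarrow> bool" where
  "is_real_cubic_field K \<longleftrightarrow> is_subfield_real K \<and>
     (\<exists>b0 b1 b2. b0 \<in> K \<and> b1 \<in> K \<and> b2 \<in> K \<and>
        (\<forall>x\<in>K. \<exists>!q :: rat \<times> rat \<times> rat.
            x = of_rat (fst q) * b0 + of_rat (fst (snd q)) * b1 + of_rat (snd (snd q)) * b2))"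

text \<open>Field embeddings of K into the complex numbers (extended by 0 outside K,
  so that each embedding is a unique function).\<close>
definition embeddings :: "real set \<Rightarrow> (real \<Rightarrow> complex) set" where
  "embeddings K = {\<sigma>. \<sigma> 1 = 1 \<and>
       (\<forall>x\<in>K. \<forall>y\<in>K. \<sigma> (x + y) = \<sigma> x + \<sigma> y \<and> \<sigma> (x * y) = \<sigma> x * \<sigma> y) \<and>
       (\<forall>x. x \<notin> K \<longrightarrow> \<sigma> x = 0)}"

definition normK :: "real set \<Rightarrow> real \<Rightarrow> complex" where
  "normK K x = (\<Prod>\<sigma>\<in>embeddings K. \<sigma> x)"

definition DeltaK :: "real set \<Rightarrow> (real \<times> real) set" where
  "DeltaK K = {(a, b). a \<in> K \<and> b \<in> K \<and>
      (\<forall>c0 c1 c2 :: rat. of_rat c0 + of_rat c1 * a + of_rat c2 * b = 0 \<longrightarrow>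
          c0 = 0 \<and> c1 = 0 \<and> c2 = 0) \<and>
      a > 0 \<and> b > 0 \<and> a + b < 1}"

definition Ind :: "(nat \<times> nat) set" where
  "Ind = {(i, j). i \<in> {0,1,2} \<and> j \<in> {0,1,2} \<and> i \<noteq> j}"

definition Delta :: "(real \<times> real) set" where
  "Delta = {(x, y). x \<ge> 0 \<and> y \<ge> 0 \<and> x + y \<le> 1}"

definition tri :: "nat \<times> nat \<Rightarrow> (real \<times> real) set" where
  "tri ij = {(x, y). (x, y) \<in> Delta \<and>
     (if ij = (1,2) then x \<ge> y
      else if ij = (2,1) then x \<le> y
      else if ij = (0,1) then 2*x + y - 1 \<le> 0
      else if ij = (1,0) then 2*x + y - 1 \<ge> 0
      else if ij = (0,2) then x + 2*y - 1 \<le> 0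
      else if ij = (2,0) then x + 2*y - 1 \<ge> 0
      else False)}"

definition Tij :: "nat \<times> nat \<Rightarrow> real \<times> real \<Rightarrow> real \<times> real" where
  "Tij ij p = (case p of (x, y) \<Rightarrow>
     (if ij = (1,2) then ((x - y) / (1 - y), y / (1 - y))
      else if ij = (2,1) then (x / (1 - x), (y - x) / (1 - x))
      else if ij = (0,1) then (x / (1 - x), y / (1 - x))
      else if ij = (1,0) then ((2*x + y - 1) / (x + y), y / (x + y))
      else if ij = (0,2) then (x / (1 - y), y / (1 - y))
      else ((x / (x + y), (x + 2*y - 1) / (x + y)))))"

definition vw :: "real set \<Rightarrow> real \<Rightarrow> real \<Rightarrow> real \<Rightarrow> real" where
  "vw K r s t = s powr r * t powr r / (cmod (normK K s) * cmod (normK K t))"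

text \<open>Ties (which do not occur on Delta_K) are resolved by an arbitrary convention.\<close>
definition eps :: "real set \<Rightarrow> real \<Rightarrow> real \<times> real \<Rightarrow> nat \<times> nat" where
  "eps K r p = (case p of (a, b) \<Rightarrow>
     (let g = 1 - a - b; v12 = vw K r a b; v01 = vw K r a g; v02 = vw K r b g in
      if v12 > v01 \<and> v12 > v02 then (if (a, b) \<in> tri (1,2) then (1,2) else (2,1))
      else if v01 > v12 \<and> v01 > v02 then (if (a, b) \<in> tri (0,1) then (0,1) else (1,0))
      else (if (a, b) \<in> tri (0,2) then (0,2) else (2,0))))"

definition Tmap :: "real set \<Rightarrow> real \<Rightarrow> real \<times> real \<Rightarrow> real \<times> real" where
  "Tmap K r p = Tij (eps K r p) p"

type_synonym ivec = "int \<times> int \<times> int"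
type_synonym rvec = "real \<times> real \<times> real"

definition comp :: "'a \<times> 'a \<times> 'a \<Rightarrow> nat \<Rightarrow> 'a" where
  "comp v k = (case v of (a, b, c) \<Rightarrow> if k = 0 then a else if k = 1 then b else c)"

definition mkv :: "(nat \<Rightarrow> 'a) \<Rightarrow> 'a \<times> 'a \<times> 'a" where
  "mkv f = (f 0, f 1, f 2)"

definition vadd :: "ivec \<Rightarrow> ivec \<Rightarrow> ivec" where
  "vadd x y = mkv (\<lambda>k. comp x k + comp y k)"

definition vsub :: "ivec \<Rightarrow> ivec \<Rightarrow> ivec" where
  "vsub x y = mkv (\<lambda>k. comp x k - comp y k)"

definition ee :: "nat \<Rightarrow> ivec" where
  "ee i = mkv (\<lambda>k. if k = i then 1 else 0)"

definition inner3 :: "ivec \<Rightarrow> rvec \<Rightarrow> real" where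
  "inner3 x a = (\<Sum>k<3. of_int (comp x k) * comp a k)"

definition nu :: "real \<times> real \<Rightarrow> rvec" where
  "nu p = (case p of (a, b) \<Rightarrow> (1 - a - b, a, b))"

definition Mmat :: "nat \<times> nat \<Rightarrow> nat \<Rightarrow> nat \<Rightarrow> int" where
  "Mmat ij k l = (if k = l \<or> (k, l) = ij then 1 else 0)"

definition Lmat :: "nat \<times> nat \<Rightarrow> nat \<Rightarrow> nat \<Rightarrow> int" where
  "Lmat ij = Mmat (snd ij, fst ij)"

definition matvec :: "(nat \<Rightarrow> nat \<Rightarrow> int) \<Rightarrow> ivec \<Rightarrow> ivec" where
  "matvec m x = mkv (\<lambda>k. \<Sum>l<3. m k l * comp x l)"

definition Linv :: "nat \<times> nat \<Rightarrow> ivec \<Rightarrow> ivec" where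
  "Linv ij y = (THE x. matvec (Lmat ij) x = y)"

text \<open>A unit square (x, i^*) is represented as the pair (x, i) with i < 3.\<close>
type_synonym square = "ivec \<times> nat"

definition stepped :: "rvec \<Rightarrow> square set" where
  "stepped a = {(x, i). i < 3 \<and> inner3 x a > 0 \<and> inner3 (vsub x (ee i)) a \<le> 0}"

text \<open>Dual substitution Theta_{(i,j)} on unit squares; its value is a formal sum
  with coefficients in N, represented as a multiset of unit squares.\<close>
definition Theta :: "nat \<times> nat \<Rightarrow> square \<Rightarrow> square multiset" where
  "Theta ij s = (case ij of (i, j) \<Rightarrow> case s of (x, k) \<Rightarrow>
     (if k = j then {# (Linv (i,j) (vadd x (ee i)), i), (Linv (i,j) x, j) #}
      else {# (Linv (i,j) x, k) #}))"

end

theory Submission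
  imports Defs
begin

text \<open>Write \<open>\<nu>\<^sub>n\<close> for \<open>\<nu>(\<alpha>\<^sub>n, \<beta>\<^sub>n)\<close> and \<open>(i, j)\<close> for \<open>\<epsilon>\<^sub>n\<close>. The map \<open>T\<^sub>(\<^sub>i\<^sub>,\<^sub>j\<^sub>)\<close> is
  the projective action of \<open>M\<^sub>(\<^sub>i\<^sub>,\<^sub>j\<^sub>)\<^sup>-\<^sup>1\<close> on \<open>\<nu>\<close>, so \<open>\<nu>\<^sub>n\<close> is a positive multiple of
  \<open>M\<^sub>(\<^sub>i\<^sub>,\<^sub>j\<^sub>) \<nu>\<^sub>n\<^sub>+\<^sub>1\<close>. Since \<open>L\<^sub>(\<^sub>i\<^sub>,\<^sub>j\<^sub>)\<close> is the transpose of \<open>M\<^sub>(\<^sub>i\<^sub>,\<^sub>j\<^sub>)\<close>, the height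
  \<open>\<langle>L\<^sup>-\<^sup>1 x, \<nu>\<^sub>n\<rangle>\<close> is that positive multiple of \<open>\<langle>x, \<nu>\<^sub>n\<^sub>+\<^sub>1\<rangle>\<close>, and all three properties
  become comparisons of heights with coordinates of \<open>\<nu>\<^sub>n\<^sub>+\<^sub>1\<close>. What is needed of the orbit
  is only that all coordinates of \<open>\<nu>\<^sub>n\<close> stay positive; rational independence of \<open>1, \<alpha>\<^sub>n, \<beta>\<^sub>n\<close>
  is invariant and excludes the boundary case \<open>\<nu>\<^sub>i = \<nu>\<^sub>j\<close>.\<close>

lemma sum_lessThan_3: "(\<Sum>k<(3::nat). f k) = f 0 + f 1 + (f 2 :: 'a::comm_monoid_add)"
  by (simp add: numeral_3_eq_3 numeral_2_eq_2 lessThan_Suc add.commute add.left_commute)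

lemma less_3_cases: "k < 3 \<Longrightarrow> k = 0 \<or> k = 1 \<or> k = (2::nat)"
  by auto

lemma mkv_eq: "mkv f = (f 0, f 1, f 2)"
  by (simp add: mkv_def)

lemma comp_mkv: "k < 3 \<Longrightarrow> comp (mkv f) k = f k"
  by (auto simp: mkv_def comp_def dest!: less_3_cases)

lemma comp_simps [simp]:
  "comp (a, b, c) 0 = a" "comp (a, b, c) (Suc 0) = b" "comp (a, b, c) 2 = c"
  by (simp_all add: comp_def)

lemma Ind_cases:
  assumes "ij \<in> Ind"
  obtains "ij = (0,1)" | "ij = (0,2)" | "ij = (1,0)" | "ij = (1,2)" | "ij = (2,0)" | "ij = (2,1)"
  using assms by (auto simp: Ind_def)

lemma Ind_less_3: "(i, j) \<in> Ind \<Longrightarrow> i < 3 \<and> j < 3 \<and> i \<noteq> j"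
  by (auto simp: Ind_def)

lemma inner3_vadd: "inner3 (vadd x y) a = inner3 x a + inner3 y a"
  by (simp add: inner3_def vadd_def mkv_def sum_lessThan_3 algebra_simps comp_def)

lemma inner3_vsub: "inner3 (vsub x y) a = inner3 x a - inner3 y a"
  by (simp add: inner3_def vsub_def mkv_def sum_lessThan_3 algebra_simps comp_def)

lemma inner3_ee: "k < 3 \<Longrightarrow> inner3 (ee k) a = comp a k"
  by (auto simp: inner3_def ee_def mkv_def sum_lessThan_3 comp_def dest!: less_3_cases)

lemma vadd_vsub_cancel: "vadd (vsub x y) y = x" "vsub (vadd x y) y = x"
  by (simp_all add: vadd_def vsub_def mkv_def comp_def split: prod.splits)

lemma Linv_eq:
  assumes "(i, j) \<in> Ind"
  shows "Linv (i, j) y = mkv (\<lambda>k. comp y k - (if k = j then comp y i else 0))"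
  unfolding Linv_def
proof (rule the_equality)
  show "matvec (Lmat (i, j)) (mkv (\<lambda>k. comp y k - (if k = j then comp y i else 0))) = y"
    using assms by (cases y) (elim Ind_cases; simp add: mkv_eq matvec_def Lmat_def Mmat_def sum_lessThan_3)
  show "x = mkv (\<lambda>k. comp y k - (if k = j then comp y i else 0))"
    if "matvec (Lmat (i, j)) x = y" for x
    using assms that[symmetric] by (cases x) (elim Ind_cases; simp add: mkv_eq matvec_def Lmat_def Mmat_def sum_lessThan_3)
qed

lemma Linv_inject:
  "(i, j) \<in> Ind \<Longrightarrow> Linv (i, j) x = Linv (i, j) y \<longleftrightarrow> x = y"
  by (simp add: Linv_eq mkv_eq) (cases x; cases y; elim Ind_cases; auto)

lemma Linv_matvec_Lmat:
  "(i, j) \<in> Ind \<Longrightarrow> Linv (i, j) (matvec (Lmat (i, j)) z) = z"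
  by (simp add: Linv_eq mkv_eq) (cases z; elim Ind_cases; simp add: mkv_eq matvec_def Lmat_def Mmat_def sum_lessThan_3)

definition rmatvec :: "(nat \<Rightarrow> nat \<Rightarrow> int) \<Rightarrow> rvec \<Rightarrow> rvec" where
  "rmatvec m b = mkv (\<lambda>k. \<Sum>l<3. of_int (m k l) * comp b l)"

lemma comp_rmatvec_Mmat:
  "(i, j) \<in> Ind \<Longrightarrow> k < 3 \<Longrightarrow>
    comp (rmatvec (Mmat (i, j)) b) k = comp b k + (if k = i then comp b j else 0)"
  by (simp add: rmatvec_def comp_mkv)
    (drule less_3_cases, elim Ind_cases disjE; simp add: Mmat_def sum_lessThan_3)

lemma inner3_Linv_rmatvec_Mmat:
  "(i, j) \<in> Ind \<Longrightarrow> inner3 (Linv (i, j) y) (rmatvec (Mmat (i, j)) b) = inner3 y b"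
  by (simp add: Linv_eq rmatvec_def mkv_eq)
    (cases y; cases b; elim Ind_cases; simp add: inner3_def Mmat_def sum_lessThan_3 algebra_simps)

definition M_proportional :: "nat \<times> nat \<Rightarrow> rvec \<Rightarrow> rvec \<Rightarrow> bool" where
  "M_proportional ij a b \<longleftrightarrow> (\<exists>c>0. \<forall>k<3. comp a k = c * comp (rmatvec (Mmat ij) b) k)"

lemma inner3_scaled:
  "(\<And>k. k < 3 \<Longrightarrow> comp a k = c * comp v k) \<Longrightarrow> inner3 x a = c * inner3 x v"
  by (simp add: inner3_def sum_distrib_left algebra_simps)

lemma stepped_iff:
  "(x, k) \<in> stepped b \<longleftrightarrow> k < 3 \<and> 0 < inner3 x b \<and> inner3 x b \<le> comp b k"
  by (auto simp: stepped_def inner3_vsub inner3_ee)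

lemma Linv_in_stepped_iff:
  assumes ij: "(i, j) \<in> Ind" and "M_proportional (i, j) a b"
  shows "(Linv (i, j) y, k) \<in> stepped a \<longleftrightarrow>
    k < 3 \<and> 0 < inner3 y b \<and> inner3 y b \<le> comp b k + (if k = i then comp b j else 0)"
proof -
  obtain c where "c > 0" and a: "\<And>k. k < 3 \<Longrightarrow> comp a k = c * comp (rmatvec (Mmat (i, j)) b) k"
    using assms(2) by (auto simp: M_proportional_def)
  have "inner3 (Linv (i, j) y) a = c * inner3 y b"
    using inner3_scaled[OF a] by (simp add: inner3_Linv_rmatvec_Mmat[OF ij])
  moreover have "comp a k = c * (comp b k + (if k = i then comp b j else 0))" if "k < 3"
    using a[OF that] by (simp add: comp_rmatvec_Mmat[OF ij that])
  ultimately show ?thesis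
    using \<open>c > 0\<close> by (auto simp: stepped_iff zero_less_mult_iff)
qed

lemma mem_Theta_iff:
  "z \<in># Theta (i, j) (x, k) \<longleftrightarrow>
    z = (Linv (i, j) x, k) \<or> (k = j \<and> z = (Linv (i, j) (vadd x (ee i)), i))"
  by (auto simp: Theta_def)

lemma stepped_shift_not_stepped:
  "(x, k) \<in> stepped b \<Longrightarrow> (vadd x (ee i), i) \<notin> stepped b"
  by (auto simp: stepped_iff inner3_vadd inner3_ee)

context
  fixes i j :: nat and a b :: rvec
  assumes ij: "(i, j) \<in> Ind" and Mab: "M_proportional (i, j) a b"
begin

lemma Theta_stepped_subset:
  assumes "0 \<le> comp b i" "0 \<le> comp b j" "(x, k) \<in> stepped b"
  shows "set_mset (Theta (i, j) (x, k)) \<subseteq> stepped a"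
proof
  fix z assume "z \<in># Theta (i, j) (x, k)"
  then consider "z = (Linv (i, j) x, k)" | "k = j" "z = (Linv (i, j) (vadd x (ee i)), i)"
    by (auto simp: mem_Theta_iff)
  then show "z \<in> stepped a"
    by cases (use assms(1,2) assms(3)[unfolded stepped_iff] Ind_less_3[OF ij] in
      \<open>auto simp: Linv_in_stepped_iff[OF ij Mab] inner3_vadd inner3_ee\<close>)
qed

lemma Theta_stepped_disjoint:
  assumes s: "(x, k) \<in> stepped b" and t: "(x', k') \<in> stepped b" and "(x, k) \<noteq> (x', k')"
  shows "set_mset (Theta (i, j) (x, k)) \<inter> set_mset (Theta (i, j) (x', k')) = {}"
proof -
  have "vadd x (ee i) \<noteq> x'" if "(x', i) \<in> stepped b"
    using stepped_shift_not_stepped[OF s] that by blast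
  moreover have "vadd x' (ee i) \<noteq> x" if "(x, i) \<in> stepped b"
    using stepped_shift_not_stepped[OF t] that by blast
  moreover have "vadd x (ee i) \<noteq> vadd x' (ee i)" if "k = j" "k' = j"
    using that assms(3) by (metis vadd_vsub_cancel(2))
  ultimately show ?thesis
    using assms by (simp add: disjoint_iff mem_Theta_iff Linv_inject[OF ij]) blast
qed

lemma Theta_stepped_cover:
  assumes "(z, k) \<in> stepped a"
  shows "\<exists>s\<in>stepped b. (z, k) \<in># Theta (i, j) s"
proof -
  define w where "w = matvec (Lmat (i, j)) z"
  have z: "z = Linv (i, j) w"
    by (simp add: w_def Linv_matvec_Lmat[OF ij])
  have w: "k < 3" "0 < inner3 w b" "inner3 w b \<le> comp b k + (if k = i then comp b j else 0)"
    using assms by (simp_all add: z Linv_in_stepped_iff[OF ij Mab])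
  consider "k \<noteq> i" | "k = i" "inner3 w b \<le> comp b i" | "k = i" "comp b i < inner3 w b"
    by linarith
  then show ?thesis
  proof cases
    case 1
    then have "(w, k) \<in> stepped b" using w by (simp add: stepped_iff)
    then show ?thesis by (rule bexI[rotated]) (simp add: z mem_Theta_iff)
  next
    case 2
    then have "(w, i) \<in> stepped b" using w by (simp add: stepped_iff)
    then show ?thesis by (rule bexI[rotated]) (simp add: z 2 mem_Theta_iff)
  next
    case 3
    then have "(vsub w (ee i), j) \<in> stepped b"
      using w Ind_less_3[OF ij] by (simp add: stepped_iff inner3_vsub inner3_ee)
    then show ?thesis by (rule bexI[rotated]) (simp add: z 3 mem_Theta_iff vadd_vsub_cancel)
  qed
qed

end

definition rat_independent3 :: "rvec \<Rightarrow> bool" where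
  "rat_independent3 v \<longleftrightarrow>
     (\<forall>c :: nat \<Rightarrow> rat. (\<Sum>k<3. of_rat (c k) * comp v k) = 0 \<longrightarrow> (\<forall>k<3. c k = 0))"

definition generic_point :: "real \<times> real \<Rightarrow> bool" where
  "generic_point p \<longleftrightarrow> (\<forall>k<3. 0 < comp (nu p) k) \<and> rat_independent3 (nu p)"

lemma DeltaK_generic_point:
  assumes "p \<in> DeltaK K"
  shows "generic_point p"
proof -
  obtain x y where p: "p = (x, y)" by (cases p)
  have indep: "\<And>c0 c1 c2. of_rat c0 + of_rat c1 * x + of_rat c2 * y = 0 \<Longrightarrow> c0 = 0 \<and> c1 = 0 \<and> c2 = 0"
    and "0 < x" "0 < y" "x + y < 1"
    using assms by (auto simp: DeltaK_def p)
  have "rat_independent3 (1 - x - y, x, y)"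
    unfolding rat_independent3_def
  proof (intro allI impI)
    fix c :: "nat \<Rightarrow> rat" and k :: nat
    assume "(\<Sum>k<3. of_rat (c k) * comp (1 - x - y, x, y) k) = 0" and "k < 3"
    then have "of_rat (c 0) + of_rat (c 1 - c 0) * x + of_rat (c 2 - c 0) * y = 0"
      by (simp add: sum_lessThan_3 of_rat_diff algebra_simps)
    from indep[OF this] \<open>k < 3\<close> show "c k = 0"
      by (auto dest!: less_3_cases)
  qed
  then show ?thesis
    using \<open>0 < x\<close> \<open>0 < y\<close> \<open>x + y < 1\<close> by (auto simp: generic_point_def p nu_def dest!: less_3_cases)
qed

lemma rat_independent3_shear:
  assumes v: "rat_independent3 v" and ij: "(i, j) \<in> Ind" and "d \<noteq> 0"
  shows "rat_independent3 (mkv (\<lambda>k. (comp v k - (if k = i then comp v j else 0)) / d))"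
  unfolding rat_independent3_def
proof (intro allI impI)
  fix c :: "nat \<Rightarrow> rat" and k :: nat
  assume h: "(\<Sum>k<3. of_rat (c k) * comp (mkv (\<lambda>k. (comp v k - (if k = i then comp v j else 0)) / d)) k) = 0"
    and "k < 3"
  define c' where "c' k = c k - (if k = j then c i else 0)" for k
  have "(\<Sum>k<3. of_rat (c k) * (comp v k - (if k = i then comp v j else 0))) = 0"
    using h \<open>d \<noteq> 0\<close> by (simp add: sum_lessThan_3 comp_mkv add_divide_distrib[symmetric])
  then have "(\<Sum>k<3. of_rat (c' k) * comp v k) = 0"
    using ij by (elim Ind_cases; simp add: c'_def sum_lessThan_3 of_rat_diff algebra_simps)
  then have c': "\<And>k. k < 3 \<Longrightarrow> c' k = 0"
    using v by (simp add: rat_independent3_def)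
  have "c i = 0"
    using c'[of i] Ind_less_3[OF ij] by (simp add: c'_def)
  then show "c k = 0"
    using c'[OF \<open>k < 3\<close>] by (simp add: c'_def split: if_splits)
qed

lemma eps_dominant:
  assumes "p \<in> Delta"
  shows "eps K r p \<in> Ind \<and> comp (nu p) (snd (eps K r p)) \<le> comp (nu p) (fst (eps K r p))"
  using assms by (cases p) (auto simp: eps_def Let_def tri_def Delta_def nu_def Ind_def)

lemma nu_Tij:
  assumes "(i, j) \<in> Ind" and "comp (nu p) j < 1"
  shows "nu (Tij (i, j) p) =
    mkv (\<lambda>k. (comp (nu p) k - (if k = i then comp (nu p) j else 0)) / (1 - comp (nu p) j))"
  using assms by (cases p) (elim Ind_cases; simp add: Tij_def nu_def mkv_eq divide_simps)

lemma generic_point_Tij: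
  assumes "generic_point p" and ij: "(i, j) \<in> Ind" and "comp (nu p) j \<le> comp (nu p) i"
  shows "generic_point (Tij (i, j) p) \<and> M_proportional (i, j) (nu p) (nu (Tij (i, j) p))"
proof -
  define v where "v = nu p"
  define d where "d = 1 - comp v j"
  have pos: "\<And>k. k < 3 \<Longrightarrow> 0 < comp v k" and indep: "rat_independent3 v"
    using assms(1) by (simp_all add: generic_point_def v_def)
  have ij3: "i < 3" "j < 3" "i \<noteq> j"
    using Ind_less_3[OF ij] by simp_all
  have "comp v 0 + comp v 1 + comp v 2 = 1"
    by (cases p) (simp add: v_def nu_def)
  then have "0 < d"
    using pos[of 0] pos[of 1] pos[of 2] ij by (elim Ind_cases) (simp_all add: d_def)
  have "comp v j \<noteq> comp v i"
  proof
    assume "comp v j = comp v i"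
    then have "(\<Sum>k<3. of_rat (if k = i then 1 else if k = j then -1 else 0) * comp v k) = 0"
      using ij by (elim Ind_cases) (simp_all add: sum_lessThan_3)
    then show False
      using indep ij3 unfolding rat_independent3_def by force
  qed
  then have "comp v j < comp v i"
    using assms(3) by (simp add: v_def)
  have T: "nu (Tij (i, j) p) = mkv (\<lambda>k. (comp v k - (if k = i then comp v j else 0)) / d)"
    using nu_Tij[OF ij, of p] \<open>0 < d\<close> unfolding v_def d_def by simp
  have "0 < comp (nu (Tij (i, j) p)) k" if "k < 3" for k
    using pos[OF that] \<open>comp v j < comp v i\<close> \<open>0 < d\<close> by (simp add: T comp_mkv[OF that])
  moreover have "rat_independent3 (nu (Tij (i, j) p))"
    unfolding T using rat_independent3_shear[OF indep ij] \<open>0 < d\<close> by simp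
  moreover have "comp v k = d * comp (rmatvec (Mmat (i, j)) (nu (Tij (i, j) p))) k" if "k < 3" for k
    unfolding comp_rmatvec_Mmat[OF ij that] using \<open>0 < d\<close> ij3 by (simp add: T comp_mkv that divide_simps)
  ultimately show ?thesis
    using \<open>0 < d\<close> by (auto simp: generic_point_def M_proportional_def v_def)
qed

lemma generic_point_in_Delta: "generic_point p \<Longrightarrow> p \<in> Delta"
  by (cases p) (auto simp: generic_point_def Delta_def nu_def dest: spec[of _ 0] spec[of _ 1] spec[of _ 2])

lemma generic_point_Tmap:
  assumes "generic_point p"
  shows "eps K r p \<in> Ind \<and> generic_point (Tmap K r p) \<and> M_proportional (eps K r p) (nu p) (nu (Tmap K r p))"
  using eps_dominant[OF generic_point_in_Delta[OF assms], of K r]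
    generic_point_Tij[OF assms, of "fst (eps K r p)" "snd (eps K r p)"]
  by (simp add: Tmap_def)

lemma generic_point_iterate: "generic_point p \<Longrightarrow> generic_point ((Tmap K r ^^ n) p)"
  by (induction n) (simp_all add: generic_point_Tmap)

theorem theorem5p5:
  fixes K :: "real set" and p q :: nat and r \<alpha> \<beta> :: real and n :: nat
  assumes "is_real_cubic_field K"
    and "p > 0" and "q > 0" and "coprime p q" and "\<not> 3 dvd p"
    and "r = real p / real q"
    and "(\<alpha>, \<beta>) \<in> DeltaK K"
  shows "let pn = (Tmap K r ^^ n) (\<alpha>, \<beta>);
             pn1 = (Tmap K r ^^ Suc n) (\<alpha>, \<beta>);
             en = eps K r pn
         in (\<forall>s \<in> stepped (nu pn1). set_mset (Theta en s) \<subseteq> stepped (nu pn))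
          \<and> (\<forall>s \<in> stepped (nu pn1). \<forall>t \<in> stepped (nu pn1). s \<noteq> t \<longrightarrow>
                 set_mset (Theta en s) \<inter> set_mset (Theta en t) = {})
          \<and> (\<forall>z \<in> stepped (nu pn). \<exists>s \<in> stepped (nu pn1). z \<in># Theta en s)"
proof -
  define pn where "pn = (Tmap K r ^^ n) (\<alpha>, \<beta>)"
  obtain i j where e: "eps K r pn = (i, j)"
    by (cases "eps K r pn")
  have "generic_point pn"
    unfolding pn_def by (rule generic_point_iterate[OF DeltaK_generic_point[OF assms(7)]])
  then have ij: "(i, j) \<in> Ind" and "generic_point (Tmap K r pn)"
    and Mab: "M_proportional (i, j) (nu pn) (nu (Tmap K r pn))"
    using generic_point_Tmap[of pn K r] by (simp_all add: e)
  then have "0 \<le> comp (nu (Tmap K r pn)) i" "0 \<le> comp (nu (Tmap K r pn)) j"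
    using Ind_less_3[OF ij] by (auto simp: generic_point_def less_imp_le)
  then show ?thesis
    using Theta_stepped_subset[OF ij Mab] Theta_stepped_disjoint[OF ij Mab]
      Theta_stepped_cover[OF ij Mab]
    unfolding Let_def pn_def[symmetric] funpow.simps(2) o_apply e
    by (simp add: Ball_def Bex_def)
qed

end
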